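(* Let $\mathcal{S}=\{s_1,\dots,s_N\}$ be a finite state space, $\mathcal{A}$ a finite action space, $\gamma\in(0,1)$, and consider the real MDP $\langle\mathcal{S},\mathcal{A},\mathbb{P},R,\gamma\rangle$ and the DT MDP $\langle\mathcal{S},\mathcal{A},\mathbb{P}',R',\gamma\rangle$. Then for all $i,j$, $$|V^*_{\mathrm{real}}(s_i)-V^*_{\mathrm{DT}}(s_j)|\le\bar d(s_i,s_j).$$
   Context: $\mathbb{P}(\cdot|s,a),\mathbb{P}'(\cdot|s,a)$ are probability distributions on $\mathcal{S}$; $R,R':\mathcal{S}\times\mathcal{A}\to\mathbb{R}$. $V^*_{\mathrm{real}}$ is the unique solution of $V(s)=\max_a\{R(s,a)+\gamma\sum_{\tilde s}\mathbb{P}(\tilde s|s,a)V(\tilde s)\}$, and $V^*_{\mathrm{DT}}$ the analogue with $\mathbb{P}',R'$. For distributions $P,Q$ on $\mathcal{S}$ and a cost $d:\mathcal{S}\times\mathcal{S}\to[0,\infty)$ (not required to vanish on the diagonal; first argument a real-MDP state, second a DT-MDP state), $W_1(P,Q;d)=\min_\Lambda\sum_{i,j}\lambda_{i,j}d(s_i,s_j)$ over nonnegative $N\times N$ matrices with row sums $P(s_i)$ and column sums $Q(s_j)$. Define $d_0\equiv0$ and $d_n(s_i,s_j)=\max_a\{|R(s_i,a)-R'(s_j,a)|+\gamma W_1(\mathbb{P}(\cdot|s_i,a),\mathbb{P}'(\cdot|s_j,a);d_{n-1})\}$; the DT bisimulation metric $\bar d$ is the pointwise limit of the nondecreasing sequence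 $(d_n)$. *)

theory Defs
  imports "HOL-Analysis.Analysis"
begin

text \<open>Finite state type 's and finite action type 'a. Transition kernels are
  functions P s a s' (probability of reaching s' from s under a);
  rewards R s a.\<close>

definition is_kernel :: "('s::finite \<Rightarrow> 'a \<Rightarrow> 's \<Rightarrow> real) \<Rightarrow> bool" where
  "is_kernel P \<longleftrightarrow> (\<forall>s a s'. 0 \<le> P s a s') \<and> (\<forall>s a. (\<Sum>s'\<in>UNIV. P s a s') = 1)"

definition bellman :: "('s::finite \<Rightarrow> 'a::finite \<Rightarrow> 's \<Rightarrow> real) \<Rightarrow> ('s \<Rightarrow> 'a \<Rightarrow> real) \<Rightarrow> real
    \<Rightarrow> ('s \<Rightarrow> real) \<Rightarrow> 's \<Rightarrow> real" where
  "bellman P R \<gamma> V s = Max (range (\<lambda>a. R s a + \<gamma> * (\<Sum>s'\<in>UNIV. P s a s' * V s')))"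

definition opt_value :: "('s::finite \<Rightarrow> 'a::finite \<Rightarrow> 's \<Rightarrow> real) \<Rightarrow> ('s \<Rightarrow> 'a \<Rightarrow> real) \<Rightarrow> real
    \<Rightarrow> 's \<Rightarrow> real" where
  "opt_value P R \<gamma> = (THE V. \<forall>s. V s = bellman P R \<gamma> V s)"

text \<open>Wasserstein-1 distance with a general (not necessarily diagonal-vanishing) cost:
  minimum (here: infimum, which is attained) of the transport cost over couplings.\<close>

definition couplings :: "('s::finite \<Rightarrow> real) \<Rightarrow> ('s \<Rightarrow> real) \<Rightarrow> ('s \<Rightarrow> 's \<Rightarrow> real) set" where
  "couplings p q = {L. (\<forall>i j. 0 \<le> L i j) \<and> (\<forall>i. (\<Sum>j\<in>UNIV. L i j) = p i)
                        \<and> (\<forall>j. (\<Sum>i\<in>UNIV. L i j) = q j)}"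

definition W1 :: "('s::finite \<Rightarrow> real) \<Rightarrow> ('s \<Rightarrow> real) \<Rightarrow> ('s \<Rightarrow> 's \<Rightarrow> real) \<Rightarrow> real" where
  "W1 p q d = Inf ((\<lambda>L. \<Sum>i\<in>UNIV. \<Sum>j\<in>UNIV. L i j * d i j) ` couplings p q)"

fun dseq :: "('s::finite \<Rightarrow> 'a::finite \<Rightarrow> 's \<Rightarrow> real) \<Rightarrow> ('s \<Rightarrow> 'a \<Rightarrow> real)
    \<Rightarrow> ('s \<Rightarrow> 'a \<Rightarrow> 's \<Rightarrow> real) \<Rightarrow> ('s \<Rightarrow> 'a \<Rightarrow> real) \<Rightarrow> real \<Rightarrow> nat \<Rightarrow> 's \<Rightarrow> 's \<Rightarrow> real" where
  "dseq P R P' R' \<gamma> 0 = (\<lambda>_ _. 0)"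
| "dseq P R P' R' \<gamma> (Suc n) = (\<lambda>si sj. Max (range (\<lambda>a.
      \<bar>R si a - R' sj a\<bar> + \<gamma> * W1 (P si a) (P' sj a) (dseq P R P' R' \<gamma> n))))"

definition dbar :: "('s::finite \<Rightarrow> 'a::finite \<Rightarrow> 's \<Rightarrow> real) \<Rightarrow> ('s \<Rightarrow> 'a \<Rightarrow> real)
    \<Rightarrow> ('s \<Rightarrow> 'a \<Rightarrow> 's \<Rightarrow> real) \<Rightarrow> ('s \<Rightarrow> 'a \<Rightarrow> real) \<Rightarrow> real \<Rightarrow> 's \<Rightarrow> 's \<Rightarrow> real" where
  "dbar P R P' R' \<gamma> si sj = lim (\<lambda>n. dseq P R P' R' \<gamma> n si sj)"

end

theory Submission
  imports Defs
begin

text \<open>Run value iteration from the zero function in both MDPs. Under any coupling of the two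
  next-state distributions, the difference of the expected next values equals the transport cost
  of the cross-differences \<open>V\<^sub>n(s) - V'\<^sub>n(t)\<close>; hence
  \<open>|V\<^sub>n(s\<^sub>i) - V'\<^sub>n(s\<^sub>j)| \<le> d\<^sub>n(s\<^sub>i, s\<^sub>j)\<close> for all \<open>n\<close> by induction. The Bellman operators
  are \<open>\<gamma>\<close>-contractions in the sup norm, so both sides of the inequality converge: the value
  iterates to the optimal values, and \<open>d\<^sub>n\<close>, being nondecreasing and bounded by
  \<open>max |R - R'| / (1 - \<gamma>)\<close>, to the bisimulation metric.\<close>

lemma Max_range_abs_diff_le:
  fixes f g h :: "'a::finite \<Rightarrow> real"
  assumes "\<And>a. \<bar>f a - g a\<bar> \<le> h a"
  shows "\<bar>Max (range f) - Max (range g)\<bar> \<le> Max (range h)"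
proof -
  have "Max (range f) \<in> range f" "Max (range g) \<in> range g" by (simp_all add: Max_in)
  then obtain a b where a: "Max (range f) = f a" and b: "Max (range g) = g b" by blast
  have "g a \<le> Max (range g)" "f b \<le> Max (range f)" "h a \<le> Max (range h)" "h b \<le> Max (range h)"
    by simp_all
  then show ?thesis using assms[of a] assms[of b] a b by linarith
qed

lemma Max_range_mono:
  fixes f g :: "'a::finite \<Rightarrow> 'b::linorder"
  assumes "\<And>a. f a \<le> g a"
  shows "Max (range f) \<le> Max (range g)"
proof -
  have "Max (range f) \<in> range f" by (simp add: Max_in)
  then obtain a where "Max (range f) = f a" by blast
  also have "\<dots> \<le> g a" by (rule assms)
  also have "\<dots> \<le> Max (range g)" by simp
  finally show ?thesis .
qed

definition is_distr :: "('s::finite \<Rightarrow> real) \<Rightarrow> bool" where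
  "is_distr p \<longleftrightarrow> (\<forall>s. 0 \<le> p s) \<and> sum p UNIV = 1"

lemma is_kernel_distr: "is_kernel P \<Longrightarrow> is_distr (P s a)"
  by (simp add: is_kernel_def is_distr_def)

definition transport_cost :: "('s::finite \<Rightarrow> 's \<Rightarrow> real) \<Rightarrow> ('s \<Rightarrow> 's \<Rightarrow> real) \<Rightarrow> real" where
  "transport_cost L d = (\<Sum>i\<in>UNIV. \<Sum>j\<in>UNIV. L i j * d i j)"

lemma W1_eq_Inf_transport_cost: "W1 p q d = Inf ((\<lambda>L. transport_cost L d) ` couplings p q)"
  by (simp add: W1_def transport_cost_def)

lemma product_coupling:
  assumes "is_distr p" "is_distr q"
  shows "(\<lambda>i j. p i * q j) \<in> couplings p q"
  using assms
  by (auto simp: couplings_def is_distr_def sum_distrib_left[symmetric] sum_distrib_right[symmetric])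

lemma coupling_le_marginal:
  assumes "L \<in> couplings p q"
  shows "L i j \<le> p i"
proof -
  have "L i j \<le> (\<Sum>j'\<in>UNIV. L i j')"
    using assms by (intro member_le_sum) (auto simp: couplings_def)
  then show ?thesis using assms by (simp add: couplings_def)
qed

lemma bdd_below_transport_costs: "bdd_below ((\<lambda>L. transport_cost L d) ` couplings p q)"
proof (rule bdd_belowI2)
  fix L assume L: "L \<in> couplings p q"
  have "- (p i * \<bar>d i j\<bar>) \<le> L i j * d i j" for i j
  proof -
    have "0 \<le> L i j" "L i j \<le> p i" using L coupling_le_marginal[OF L] by (auto simp: couplings_def)
    then have "L i j * \<bar>d i j\<bar> \<le> p i * \<bar>d i j\<bar>" by (simp add: mult_right_mono)
    moreover have "- (L i j * \<bar>d i j\<bar>) \<le> L i j * d i j"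
      using \<open>0 \<le> L i j\<close> by (metis abs_ge_minus_self abs_mult abs_of_nonneg minus_le_iff)
    ultimately show ?thesis by linarith
  qed
  then show "(\<Sum>i\<in>UNIV. \<Sum>j\<in>UNIV. - (p i * \<bar>d i j\<bar>)) \<le> transport_cost L d"
    unfolding transport_cost_def by (intro sum_mono)
qed

lemma W1_le_transport_cost: "L \<in> couplings p q \<Longrightarrow> W1 p q d \<le> transport_cost L d"
  unfolding W1_eq_Inf_transport_cost by (auto intro: cInf_lower bdd_below_transport_costs)

lemma le_W1I:
  assumes "couplings p q \<noteq> {}" "\<And>L. L \<in> couplings p q \<Longrightarrow> c \<le> transport_cost L d"
  shows "c \<le> W1 p q d"
  unfolding W1_eq_Inf_transport_cost using assms by (intro cInf_greatest) auto

lemma transport_cost_mono: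
  assumes "L \<in> couplings p q" "\<And>i j. d i j \<le> d' i j"
  shows "transport_cost L d \<le> transport_cost L d'"
  using assms unfolding transport_cost_def couplings_def by (intro sum_mono mult_left_mono) auto

lemma transport_cost_const:
  assumes "L \<in> couplings p q" "is_distr p"
  shows "transport_cost L (\<lambda>_ _. c) = c"
  using assms
  by (simp add: transport_cost_def couplings_def is_distr_def sum_distrib_right[symmetric])

lemma W1_mono:
  assumes "is_distr p" "is_distr q" "\<And>i j. d i j \<le> d' i j"
  shows "W1 p q d \<le> W1 p q d'"
proof (rule le_W1I)
  show "couplings p q \<noteq> {}" using product_coupling[OF assms(1,2)] by blast
  fix L assume "L \<in> couplings p q"
  then show "W1 p q d \<le> transport_cost L d'"
    using W1_le_transport_cost transport_cost_mono assms(3) order_trans by blast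
qed

lemma W1_nonneg:
  assumes "is_distr p" "is_distr q" "\<And>i j. 0 \<le> d i j"
  shows "0 \<le> W1 p q d"
proof (rule le_W1I)
  show "couplings p q \<noteq> {}" using product_coupling[OF assms(1,2)] by blast
  fix L assume L: "L \<in> couplings p q"
  show "0 \<le> transport_cost L d"
    using transport_cost_mono[OF L, of "\<lambda>_ _. 0"] transport_cost_const[OF L assms(1), of 0] assms(3)
    by simp
qed

lemma W1_le_const:
  assumes "is_distr p" "is_distr q" "\<And>i j. d i j \<le> c"
  shows "W1 p q d \<le> c"
proof -
  have L: "(\<lambda>i j. p i * q j) \<in> couplings p q" by (rule product_coupling[OF assms(1,2)])
  have "W1 p q d \<le> transport_cost (\<lambda>i j. p i * q j) d" by (rule W1_le_transport_cost[OF L])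
  also have "\<dots> \<le> transport_cost (\<lambda>i j. p i * q j) (\<lambda>_ _. c)"
    by (rule transport_cost_mono[OF L assms(3)])
  also have "\<dots> = c" by (rule transport_cost_const[OF L assms(1)])
  finally show ?thesis .
qed

lemma expectation_diff_eq_transport_cost:
  assumes "L \<in> couplings p q"
  shows "(\<Sum>i\<in>UNIV. p i * V i) - (\<Sum>j\<in>UNIV. q j * W j) = transport_cost L (\<lambda>i j. V i - W j)"
proof -
  have "(\<Sum>i\<in>UNIV. p i * V i) = (\<Sum>i\<in>UNIV. \<Sum>j\<in>UNIV. L i j * V i)"
    using assms by (auto simp: couplings_def sum_distrib_right[symmetric])
  moreover have "(\<Sum>j\<in>UNIV. q j * W j) = (\<Sum>i\<in>UNIV. \<Sum>j\<in>UNIV. L i j * W j)"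
    using assms by (subst sum.swap) (auto simp: couplings_def sum_distrib_right[symmetric])
  ultimately show ?thesis
    by (simp add: transport_cost_def sum_subtractf[symmetric] right_diff_distrib)
qed

lemma abs_transport_cost_le:
  assumes "L \<in> couplings p q"
  shows "\<bar>transport_cost L d\<bar> \<le> transport_cost L (\<lambda>i j. \<bar>d i j\<bar>)"
proof -
  have "\<bar>transport_cost L d\<bar> \<le> (\<Sum>i\<in>UNIV. \<Sum>j\<in>UNIV. \<bar>L i j * d i j\<bar>)"
    unfolding transport_cost_def by (rule order_trans[OF sum_abs sum_mono[OF sum_abs]])
  also have "\<dots> = transport_cost L (\<lambda>i j. \<bar>d i j\<bar>)"
    using assms by (simp add: transport_cost_def couplings_def abs_mult)
  finally show ?thesis .
qed

text \<open>The easy half of Kantorovich duality, for costs that need not vanish on the diagonal.\<close>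

lemma abs_expectation_diff_le_W1:
  assumes "is_distr p" "is_distr q" "\<And>i j. \<bar>V i - W j\<bar> \<le> d i j"
  shows "\<bar>(\<Sum>i\<in>UNIV. p i * V i) - (\<Sum>j\<in>UNIV. q j * W j)\<bar> \<le> W1 p q d"
proof (rule le_W1I)
  show "couplings p q \<noteq> {}" using product_coupling[OF assms(1,2)] by blast
  fix L assume L: "L \<in> couplings p q"
  have "\<bar>(\<Sum>i\<in>UNIV. p i * V i) - (\<Sum>j\<in>UNIV. q j * W j)\<bar> = \<bar>transport_cost L (\<lambda>i j. V i - W j)\<bar>"
    by (simp add: expectation_diff_eq_transport_cost[OF L])
  also have "\<dots> \<le> transport_cost L (\<lambda>i j. \<bar>V i - W j\<bar>)" by (rule abs_transport_cost_le[OF L])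
  also have "\<dots> \<le> transport_cost L d" by (rule transport_cost_mono[OF L assms(3)])
  finally show "\<bar>(\<Sum>i\<in>UNIV. p i * V i) - (\<Sum>j\<in>UNIV. q j * W j)\<bar> \<le> transport_cost L d" .
qed

lemma abs_expectation_diff_le:
  assumes "is_distr p" "\<And>s. \<bar>V s - W s\<bar> \<le> c"
  shows "\<bar>(\<Sum>s\<in>UNIV. p s * V s) - (\<Sum>s\<in>UNIV. p s * W s)\<bar> \<le> c"
proof -
  have "\<bar>(\<Sum>s\<in>UNIV. p s * V s) - (\<Sum>s\<in>UNIV. p s * W s)\<bar> = \<bar>\<Sum>s\<in>UNIV. p s * (V s - W s)\<bar>"
    by (simp add: sum_subtractf right_diff_distrib)
  also have "\<dots> \<le> (\<Sum>s\<in>UNIV. \<bar>p s * (V s - W s)\<bar>)" by (rule sum_abs)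
  also have "\<dots> \<le> (\<Sum>s\<in>UNIV. p s * c)"
    using assms by (intro sum_mono) (simp add: is_distr_def abs_mult mult_left_mono)
  also have "\<dots> = c" using assms(1) by (simp add: is_distr_def sum_distrib_right[symmetric])
  finally show ?thesis .
qed

definition sup_contraction :: "real \<Rightarrow> (('s \<Rightarrow> real) \<Rightarrow> 's \<Rightarrow> real) \<Rightarrow> bool" where
  "sup_contraction \<gamma> T \<longleftrightarrow>
     (\<forall>V W c. (\<forall>s. \<bar>V s - W s\<bar> \<le> c) \<longrightarrow> (\<forall>s. \<bar>T V s - T W s\<bar> \<le> \<gamma> * c))"

lemma sup_contractionD:
  "sup_contraction \<gamma> T \<Longrightarrow> (\<And>s. \<bar>V s - W s\<bar> \<le> c) \<Longrightarrow> \<bar>T V s - T W s\<bar> \<le> \<gamma> * c"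
  by (simp add: sup_contraction_def)

lemma sup_contraction_iterates:
  assumes "sup_contraction \<gamma> T" "\<And>s. \<bar>V s - W s\<bar> \<le> c"
  shows "\<bar>(T ^^ n) V s - (T ^^ n) W s\<bar> \<le> \<gamma> ^ n * c"
proof (induction n arbitrary: s)
  case 0
  show ?case using assms(2) by simp
next
  case (Suc n)
  then show ?case by (simp add: sup_contractionD[OF assms(1)] mult.assoc)
qed

lemma sup_contraction_fixpoint_unique:
  fixes V W :: "'s::finite \<Rightarrow> real"
  assumes "sup_contraction \<gamma> T" "0 \<le> \<gamma>" "\<gamma> < 1" "T V = V" "T W = W"
  shows "V = W"
proof
  fix s
  define c where "c = (\<Sum>s\<in>UNIV. \<bar>V s - W s\<bar>)"
  have "\<bar>V s' - W s'\<bar> \<le> c" for s'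
    unfolding c_def by (rule member_le_sum) auto
  moreover have "(T ^^ n) V = V" "(T ^^ n) W = W" for n
    by (induction n) (simp_all add: assms(4,5))
  ultimately have "\<bar>V s - W s\<bar> \<le> \<gamma> ^ n * c" for n
    using sup_contraction_iterates[OF assms(1), of V W c n s] by simp
  moreover have "(\<lambda>n. \<gamma> ^ n * c) \<longlonglongrightarrow> 0"
    using assms(2,3) by (intro tendsto_mult_left_zero LIMSEQ_power_zero) auto
  ultimately have "\<bar>V s - W s\<bar> \<le> 0"
    using LIMSEQ_le_const[of "\<lambda>n. \<gamma> ^ n * c" 0 "\<bar>V s - W s\<bar>"] by blast
  then show "V s = W s" by simp
qed

lemma sup_contraction_iterates_convergent:
  fixes V0 :: "'s::finite \<Rightarrow> real"
  assumes "sup_contraction \<gamma> T" "0 \<le> \<gamma>" "\<gamma> < 1"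
  shows "\<exists>V. \<forall>s. (\<lambda>n. (T ^^ n) V0 s) \<longlonglongrightarrow> V s"
proof -
  define M where "M = (\<Sum>s\<in>UNIV. \<bar>T V0 s - V0 s\<bar>)"
  have "\<bar>T V0 s - V0 s\<bar> \<le> M" for s
    unfolding M_def by (rule member_le_sum) auto
  from sup_contraction_iterates[OF assms(1) this]
  have step: "norm ((T ^^ Suc k) V0 s - (T ^^ k) V0 s) \<le> \<gamma> ^ k * M" for k s
    by (simp add: funpow_swap1)
  have "convergent (\<lambda>n. (T ^^ n) V0 s)" for s
  proof -
    have "summable (\<lambda>k. \<gamma> ^ k * M)"
      using assms(2,3) by (intro summable_mult2 summable_geometric) simp
    then have "summable (\<lambda>k. (T ^^ Suc k) V0 s - (T ^^ k) V0 s)"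
      using step by (rule summable_comparison_test')
    then have "convergent (\<lambda>n. (T ^^ n) V0 s - (T ^^ 0) V0 s)"
      by (simp only: summable_iff_convergent sum_lessThan_telescope[of "\<lambda>i. (T ^^ i) V0 s"])
    then show ?thesis by (simp only: convergent_diff_const_right_iff)
  qed
  then show ?thesis
    by (intro exI[of _ "\<lambda>s. lim (\<lambda>n. (T ^^ n) V0 s)"] allI) (simp add: convergent_LIMSEQ_iff)
qed

lemma sup_contraction_limit_fixpoint:
  fixes V0 V :: "'s::finite \<Rightarrow> real"
  assumes "sup_contraction \<gamma> T" "\<And>s. (\<lambda>n. (T ^^ n) V0 s) \<longlonglongrightarrow> V s"
  shows "T V = V"
proof
  fix s
  define e where "e n = (\<Sum>s\<in>UNIV. \<bar>V s - (T ^^ n) V0 s\<bar>)" for n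
  have "e \<longlonglongrightarrow> (\<Sum>s\<in>UNIV. \<bar>V s - V s\<bar>)"
    unfolding e_def by (intro tendsto_intros assms(2))
  then have e_lim: "(\<lambda>n. \<gamma> * e n) \<longlonglongrightarrow> 0" by (simp add: tendsto_mult_right_zero)
  have bound: "norm (T V s - (T ^^ Suc n) V0 s) \<le> \<gamma> * e n" for n
  proof -
    have "\<bar>V s' - (T ^^ n) V0 s'\<bar> \<le> e n" for s'
      unfolding e_def by (rule member_le_sum) auto
    from sup_contractionD[OF assms(1) this] show ?thesis by simp
  qed
  have "(\<lambda>n. T V s - (T ^^ Suc n) V0 s) \<longlonglongrightarrow> 0"
    by (rule Lim_null_comparison[OF always_eventually[OF allI[OF bound]] e_lim])
  moreover have "(\<lambda>n. T V s - (T ^^ Suc n) V0 s) \<longlonglongrightarrow> T V s - V s"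
    by (intro tendsto_diff tendsto_const LIMSEQ_Suc[OF assms(2)])
  ultimately have "0 = T V s - V s" by (rule LIMSEQ_unique)
  then show "T V s = V s" by simp
qed

lemma bellman_sup_contraction:
  fixes P :: "'s::finite \<Rightarrow> 'a::finite \<Rightarrow> 's \<Rightarrow> real"
  assumes "is_kernel P" "0 \<le> \<gamma>"
  shows "sup_contraction \<gamma> (bellman P R \<gamma>)"
  unfolding sup_contraction_def
proof (intro allI impI)
  fix V W :: "'s \<Rightarrow> real" and c s
  assume "\<forall>s. \<bar>V s - W s\<bar> \<le> c"
  then have "\<bar>(\<Sum>s'\<in>UNIV. P s a s' * V s') - (\<Sum>s'\<in>UNIV. P s a s' * W s')\<bar> \<le> c" for a
    using assms(1) by (intro abs_expectation_diff_le is_kernel_distr) auto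
  then have "\<bar>R s a + \<gamma> * (\<Sum>s'\<in>UNIV. P s a s' * V s')
      - (R s a + \<gamma> * (\<Sum>s'\<in>UNIV. P s a s' * W s'))\<bar> \<le> \<gamma> * c" for a
    using assms(2) by (simp add: right_diff_distrib[symmetric] abs_mult mult_left_mono)
  then show "\<bar>bellman P R \<gamma> V s - bellman P R \<gamma> W s\<bar> \<le> \<gamma> * c"
    unfolding bellman_def using Max_range_abs_diff_le[where h = "\<lambda>_::'a. \<gamma> * c"] by simp
qed

lemma value_iteration_tendsto_opt_value:
  assumes "is_kernel P" "0 \<le> \<gamma>" "\<gamma> < 1"
  shows "(\<lambda>n. (bellman P R \<gamma> ^^ n) V0 s) \<longlonglongrightarrow> opt_value P R \<gamma> s"
proof -
  have T: "sup_contraction \<gamma> (bellman P R \<gamma>)" by (rule bellman_sup_contraction[OF assms(1,2)])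
  obtain V where V: "\<And>s. (\<lambda>n. (bellman P R \<gamma> ^^ n) V0 s) \<longlonglongrightarrow> V s"
    using sup_contraction_iterates_convergent[OF T assms(2,3)] by blast
  have fixp: "bellman P R \<gamma> V = V" by (rule sup_contraction_limit_fixpoint[OF T V])
  have "opt_value P R \<gamma> = V"
    unfolding opt_value_def
  proof (rule the_equality)
    show "\<forall>s. V s = bellman P R \<gamma> V s" using fixp by simp
    fix W assume "\<forall>s. W s = bellman P R \<gamma> W s"
    then have "bellman P R \<gamma> W = W" by auto
    then show "W = V" by (rule sup_contraction_fixpoint_unique[OF T assms(2,3) _ fixp])
  qed
  then show ?thesis using V by simp
qed

definition bisim_step :: "('s::finite \<Rightarrow> 'a::finite \<Rightarrow> 's \<Rightarrow> real) \<Rightarrow> ('s \<Rightarrow> 'a \<Rightarrow> real)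
    \<Rightarrow> ('s \<Rightarrow> 'a \<Rightarrow> 's \<Rightarrow> real) \<Rightarrow> ('s \<Rightarrow> 'a \<Rightarrow> real) \<Rightarrow> real \<Rightarrow> ('s \<Rightarrow> 's \<Rightarrow> real) \<Rightarrow> 's \<Rightarrow> 's \<Rightarrow> real"
  where "bisim_step P R P' R' \<gamma> d si sj =
    Max (range (\<lambda>a. \<bar>R si a - R' sj a\<bar> + \<gamma> * W1 (P si a) (P' sj a) d))"

lemma dseq_Suc: "dseq P R P' R' \<gamma> (Suc n) = bisim_step P R P' R' \<gamma> (dseq P R P' R' \<gamma> n)"
  by (simp add: bisim_step_def fun_eq_iff)

lemma bellman_abs_diff_le_bisim_step:
  assumes "is_kernel P" "is_kernel P'" "0 \<le> \<gamma>" "\<And>i j. \<bar>V i - W j\<bar> \<le> d i j"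
  shows "\<bar>bellman P R \<gamma> V si - bellman P' R' \<gamma> W sj\<bar> \<le> bisim_step P R P' R' \<gamma> d si sj"
  unfolding bellman_def bisim_step_def
proof (rule Max_range_abs_diff_le)
  fix a
  have "\<bar>(\<Sum>i\<in>UNIV. P si a i * V i) - (\<Sum>j\<in>UNIV. P' sj a j * W j)\<bar> \<le> W1 (P si a) (P' sj a) d"
    using assms by (intro abs_expectation_diff_le_W1 is_kernel_distr)
  then have "\<bar>\<gamma> * ((\<Sum>i\<in>UNIV. P si a i * V i) - (\<Sum>j\<in>UNIV. P' sj a j * W j))\<bar>
      \<le> \<gamma> * W1 (P si a) (P' sj a) d"
    using assms(3) by (simp add: abs_mult mult_left_mono)
  then show "\<bar>R si a + \<gamma> * (\<Sum>s'\<in>UNIV. P si a s' * V s') - (R' sj a + \<gamma> * (\<Sum>s'\<in>UNIV. P' sj a s' * W s'))\<bar>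
      \<le> \<bar>R si a - R' sj a\<bar> + \<gamma> * W1 (P si a) (P' sj a) d"
    by (simp add: right_diff_distrib)
qed

lemma bisim_step_nonneg:
  assumes "is_kernel P" "is_kernel P'" "0 \<le> \<gamma>" "\<And>i j. 0 \<le> d i j"
  shows "0 \<le> bisim_step P R P' R' \<gamma> d si sj"
proof -
  fix a
  have "0 \<le> W1 (P si a) (P' sj a) d"
    by (rule W1_nonneg[OF is_kernel_distr[OF assms(1)] is_kernel_distr[OF assms(2)] assms(4)])
  then have "0 \<le> \<bar>R si a - R' sj a\<bar> + \<gamma> * W1 (P si a) (P' sj a) d" using assms(3) by simp
  also have "\<dots> \<le> bisim_step P R P' R' \<gamma> d si sj" unfolding bisim_step_def by simp
  finally show ?thesis .
qed

lemma bisim_step_mono: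
  assumes "is_kernel P" "is_kernel P'" "0 \<le> \<gamma>" "\<And>i j. d i j \<le> d' i j"
  shows "bisim_step P R P' R' \<gamma> d si sj \<le> bisim_step P R P' R' \<gamma> d' si sj"
proof -
  have "W1 (P si a) (P' sj a) d \<le> W1 (P si a) (P' sj a) d'" for a
    by (rule W1_mono[OF is_kernel_distr[OF assms(1)] is_kernel_distr[OF assms(2)] assms(4)])
  then have "\<bar>R si a - R' sj a\<bar> + \<gamma> * W1 (P si a) (P' sj a) d
      \<le> \<bar>R si a - R' sj a\<bar> + \<gamma> * W1 (P si a) (P' sj a) d'" for a
    using assms(3) by (simp add: mult_left_mono)
  then show ?thesis unfolding bisim_step_def by (rule Max_range_mono)
qed

lemma bisim_step_le:
  assumes "is_kernel P" "is_kernel P'" "0 \<le> \<gamma>"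
    and "\<And>a. \<bar>R si a - R' sj a\<bar> \<le> C" "\<And>i j. d i j \<le> B"
  shows "bisim_step P R P' R' \<gamma> d si sj \<le> C + \<gamma> * B"
proof -
  have "W1 (P si a) (P' sj a) d \<le> B" for a
    by (rule W1_le_const[OF is_kernel_distr[OF assms(1)] is_kernel_distr[OF assms(2)] assms(5)])
  then have "\<bar>R si a - R' sj a\<bar> + \<gamma> * W1 (P si a) (P' sj a) d \<le> C + \<gamma> * B" for a
    using assms(3,4) by (simp add: add_mono mult_left_mono)
  then show ?thesis unfolding bisim_step_def by (simp add: Max_le_iff)
qed

lemma dseq_le_Suc:
  assumes "is_kernel P" "is_kernel P'" "0 \<le> \<gamma>"
  shows "dseq P R P' R' \<gamma> n si sj \<le> dseq P R P' R' \<gamma> (Suc n) si sj"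
proof (induction n arbitrary: si sj)
  case 0
  show ?case by (simp only: dseq_Suc dseq.simps(1)) (rule bisim_step_nonneg[OF assms], simp)
next
  case (Suc n)
  show ?case using bisim_step_mono[OF assms Suc] by (simp only: dseq_Suc)
qed

lemma dseq_le:
  assumes "is_kernel P" "is_kernel P'" "0 \<le> \<gamma>" "\<gamma> < 1"
    and "\<And>i j a. \<bar>R i a - R' j a\<bar> \<le> C"
  shows "dseq P R P' R' \<gamma> n si sj \<le> C / (1 - \<gamma>)"
proof (induction n arbitrary: si sj)
  case 0
  have "0 \<le> C" using assms(5) abs_ge_zero order_trans by blast
  then show ?case using assms(4) by simp
next
  case (Suc n)
  have "dseq P R P' R' \<gamma> (Suc n) si sj \<le> C + \<gamma> * (C / (1 - \<gamma>))"
    unfolding dseq_Suc by (rule bisim_step_le[OF assms(1-3) assms(5) Suc])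
  also have "\<dots> = C / (1 - \<gamma>)" using assms(4) by (simp add: field_simps)
  finally show ?case .
qed

lemma dseq_tendsto_dbar:
  assumes "is_kernel P" "is_kernel P'" "0 \<le> \<gamma>" "\<gamma> < 1"
  shows "(\<lambda>n. dseq P R P' R' \<gamma> n si sj) \<longlonglongrightarrow> dbar P R P' R' \<gamma> si sj"
proof -
  define C where "C = (\<Sum>(i, j, a)\<in>UNIV. \<bar>R i a - R' j a\<bar>)"
  have "\<bar>R i a - R' j a\<bar> \<le> C" for i j a
    using member_le_sum[of "(i, j, a)" UNIV "\<lambda>(i, j, a). \<bar>R i a - R' j a\<bar>"]
    by (auto simp: C_def split: prod.splits)
  then have "\<forall>n. dseq P R P' R' \<gamma> n si sj \<le> C / (1 - \<gamma>)" using dseq_le[OF assms] by blast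
  moreover have "incseq (\<lambda>n. dseq P R P' R' \<gamma> n si sj)"
    by (rule incseq_SucI) (rule dseq_le_Suc[OF assms(1-3)])
  ultimately obtain L where "(\<lambda>n. dseq P R P' R' \<gamma> n si sj) \<longlonglongrightarrow> L"
    using incseq_convergent by blast
  then show ?thesis unfolding dbar_def by (simp add: limI)
qed

lemma value_iteration_abs_diff_le_dseq:
  assumes "is_kernel P" "is_kernel P'" "0 \<le> \<gamma>"
  shows "\<bar>(bellman P R \<gamma> ^^ n) (\<lambda>_. 0) si - (bellman P' R' \<gamma> ^^ n) (\<lambda>_. 0) sj\<bar>
    \<le> dseq P R P' R' \<gamma> n si sj"
proof (induction n arbitrary: si sj)
  case 0
  show ?case by simp
next
  case (Suc n)
  show ?case
    unfolding dseq_Suc funpow.simps o_apply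
    by (rule bellman_abs_diff_le_bisim_step[OF assms Suc])
qed

theorem corollary1:
  fixes P P' :: "'s::finite \<Rightarrow> 'a::finite \<Rightarrow> 's \<Rightarrow> real"
    and R R' :: "'s \<Rightarrow> 'a \<Rightarrow> real"
    and \<gamma> :: real
  assumes "is_kernel P" and "is_kernel P'"
    and "0 < \<gamma>" and "\<gamma> < 1"
  shows "\<forall>si sj. \<bar>opt_value P R \<gamma> si - opt_value P' R' \<gamma> sj\<bar> \<le> dbar P R P' R' \<gamma> si sj"
proof (intro allI)
  fix si sj
  have \<gamma>: "0 \<le> \<gamma>" using assms(3) by simp
  have lim_values: "(\<lambda>n. \<bar>(bellman P R \<gamma> ^^ n) (\<lambda>_. 0) si - (bellman P' R' \<gamma> ^^ n) (\<lambda>_. 0) sj\<bar>)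
      \<longlonglongrightarrow> \<bar>opt_value P R \<gamma> si - opt_value P' R' \<gamma> sj\<bar>"
    by (intro tendsto_intros value_iteration_tendsto_opt_value assms(1,2,4) \<gamma>)
  have lim_dseq: "(\<lambda>n. dseq P R P' R' \<gamma> n si sj) \<longlonglongrightarrow> dbar P R P' R' \<gamma> si sj"
    by (rule dseq_tendsto_dbar[OF assms(1,2) \<gamma> assms(4)])
  show "\<bar>opt_value P R \<gamma> si - opt_value P' R' \<gamma> sj\<bar> \<le> dbar P R P' R' \<gamma> si sj"
    by (rule LIMSEQ_le[OF lim_values lim_dseq])
      (use value_iteration_abs_diff_le_dseq[OF assms(1,2) \<gamma>] in blast)
qed

end
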